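(* Let $m\ge 2$. If the Fibonacci sequence is defective mod $m$, then every Gibonacci sequence $\{G_n(a,b)\}$ (with $\gcd(a,b)=1$) is defective mod $m$.
   Context: For integers $a,b$ with $\gcd(a,b)=1$, the Gibonacci sequence $\{G_n(a,b)\}_{n\ge1}$ is defined by $G_1=a$, $G_2=b$, $G_{n+1}=G_{n-1}+G_n$. The Fibonacci sequence is $F_n=G_n(1,1)$. A sequence is complete mod $m$ if every residue class modulo $m$ contains some term of the sequence, and defective mod $m$ otherwise. *)

theory Defs
  imports Main
begin

text \<open>Gibonacci sequence G_n(a,b), n \<ge> 1. We store it with an auxiliary
value at index 0 (G_0 = b - a, consistent with the recurrence); only
indices n \<ge> 1 are used as terms of the sequence.\<close>
fun gib :: "int \<Rightarrow> int \<Rightarrow> nat \<Rightarrow> int" where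
  "gib a b 0 = b - a"
| "gib a b (Suc 0) = a"
| "gib a b (Suc (Suc n)) = gib a b n + gib a b (Suc n)"

definition fibo :: "nat \<Rightarrow> int" where
  "fibo n = gib 1 1 n"

definition complete_mod :: "(nat \<Rightarrow> int) \<Rightarrow> int \<Rightarrow> bool" where
  "complete_mod s m \<longleftrightarrow> (\<forall>r::int. \<exists>n\<ge>1. s n mod m = r mod m)"

definition defective_mod :: "(nat \<Rightarrow> int) \<Rightarrow> int \<Rightarrow> bool" where
  "defective_mod s m \<longleftrightarrow> \<not> complete_mod s m"

end

theory Submission
  imports Defs "HOL-Number_Theory.Cong" "HOL-Number_Theory.Fib"
begin

text \<open>Suppose \<open>G = G(a,b)\<close> were complete mod \<open>m\<close>, so that \<open>m\<close> divides some term
  \<open>G k\<close>. The addition formula \<open>G (k + n + 1) = G k * F n + G (k + 1) * F (n + 1)\<close> then gives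
  \<open>G (k + n + 1) \<equiv> c * F (n + 1) (mod m)\<close> with \<open>c = G (k + 1)\<close>, a unit mod \<open>m\<close> because
  consecutive terms are coprime. As \<open>G\<close> is purely periodic mod \<open>m\<close> (the step on pairs of
  residues is invertible), every residue \<open>c * r\<close> is taken by a term beyond index \<open>k\<close>, hence
  every residue \<open>r\<close> is taken by \<open>F\<close>.\<close>

lemma gib_add:
  "gib a b (Suc (k + n)) = gib a b k * fibo n + gib a b (Suc k) * fibo (Suc n)"
proof (induction n rule: fib.induct)
  case (3 n)
  have "gib a b (Suc (k + Suc (Suc n))) = gib a b (Suc (k + n)) + gib a b (Suc (k + Suc n))"
    by (simp only: add_Suc_right gib.simps)
  with 3 show ?case
    by (simp add: fibo_def algebra_simps)
qed (simp_all add: fibo_def)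

lemma gcd_gib_Suc: "gcd (gib a b n) (gib a b (Suc n)) = gcd a b"
proof (induction n)
  case 0
  show ?case
    by (metis gcd.commute gcd_diff1 gib.simps(1,2))
next
  case (Suc n)
  then show ?case
    by (metis add.commute gcd.commute gcd_add2 gib.simps(3))
qed

lemma periodic_if_inj_on_step:
  fixes s :: "nat \<Rightarrow> 'a"
  assumes "finite (range s)" and "inj_on f (range s)" and step: "\<And>n. s (Suc n) = f (s n)"
  obtains p where "p > 0" and "\<And>n. s (n + p) = s n"
proof -
  have "\<not> inj s"
    using assms(1) finite_imageD infinite_UNIV_nat by blast
  then obtain i j where "i < j" and "s i = s j"
    unfolding inj_def by (metis linorder_neqE_nat)
  then obtain p where "p > 0" and "s (i + p) = s i"
    by (metis less_imp_add_positive)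
  have start: "s p = s 0"
    using \<open>s (i + p) = s i\<close>
  proof (induction i)
    case (Suc i)
    then show ?case
      using assms(2) step by (simp add: inj_on_def)
  qed simp
  have "s (n + p) = s n" for n
    by (induction n) (simp_all add: start step)
  with \<open>p > 0\<close> show thesis
    using that by blast
qed

lemma gib_mod_periodic:
  fixes m :: int
  assumes "m > 0"
  obtains p where "p > 0" and "\<And>n. gib a b (n + p) mod m = gib a b n mod m"
proof -
  define s where "s n = (gib a b n mod m, gib a b (Suc n) mod m)" for n
  define f where "f = (\<lambda>(x, y). (y, (x + y) mod m))"
  have "range s \<subseteq> {0..<m} \<times> {0..<m}"
    using assms by (auto simp: s_def)
  then have "finite (range s)"
    by (rule finite_subset) simp
  moreover have "inj_on f ({0..<m} \<times> {0..<m})"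
    by (auto simp: inj_on_def f_def) (metis add_diff_cancel_right' mod_diff_left_eq mod_pos_pos_trivial)
  then have "inj_on f (range s)"
    using \<open>range s \<subseteq> _\<close> by (rule inj_on_subset)
  moreover have "s (Suc n) = f (s n)" for n
    by (simp add: s_def f_def mod_add_eq)
  ultimately obtain p where "p > 0" and per: "\<And>n. s (n + p) = s n"
    using periodic_if_inj_on_step[of s f] by blast
  have "gib a b (n + p) mod m = gib a b n mod m" for n
    using per[of n] by (simp add: s_def)
  with \<open>p > 0\<close> show thesis
    using that by blast
qed

lemma gib_mod_recurs_beyond:
  fixes m :: int
  assumes "m > 0"
  obtains j' where "j' \<ge> N" and "gib a b j' mod m = gib a b j mod m"
proof -
  obtain p where "p > 0" and per: "\<And>n. gib a b (n + p) mod m = gib a b n mod m"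
    using gib_mod_periodic assms by blast
  have "gib a b (j + t * p) mod m = gib a b j mod m" for t
  proof (induction t)
    case (Suc t)
    have "j + Suc t * p = (j + t * p) + p"
      by simp
    show ?case
      unfolding \<open>j + Suc t * p = _\<close> per by (rule Suc.IH)
  qed simp
  moreover have "j + N * p \<ge> N"
    using \<open>p > 0\<close> by (simp add: trans_le_add2)
  ultimately show thesis
    using that by blast
qed

lemma gib_cong_fibo_after_multiple:
  assumes "m dvd gib a b k"
  shows "[gib a b (Suc (k + n)) = gib a b (Suc k) * fibo (Suc n)] (mod m)"
proof -
  have "[gib a b k * fibo n = 0] (mod m)"
    using assms by (simp add: cong_0_iff)
  then show ?thesis
    unfolding gib_add using cong_add_rcancel_0 by blast
qed

lemma complete_fibo_if_complete_gib:
  fixes m :: int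
  assumes "m > 0" and "gcd a b = 1" and complete: "complete_mod (gib a b) m"
  shows "complete_mod fibo m"
  unfolding complete_mod_def
proof
  fix r
  obtain k where "m dvd gib a b k"
    using complete[unfolded complete_mod_def, rule_format, of 0] by auto
  define c where "c = gib a b (Suc k)"
  have "coprime (gib a b k) c"
    using gcd_gib_Suc[of a b k] assms(2) by (simp add: c_def coprime_iff_gcd_eq_1)
  then have "coprime c m"
    using \<open>m dvd gib a b k\<close> by (metis coprime_commute coprime_divisors dvd_refl)
  obtain j where "gib a b j mod m = c * r mod m"
    using complete[unfolded complete_mod_def, rule_format, of "c * r"] by auto
  obtain j' where "j' \<ge> Suc k" and "gib a b j' mod m = gib a b j mod m"
    by (rule gib_mod_recurs_beyond[OF \<open>m > 0\<close>])
  then obtain n where j': "j' = Suc (k + n)"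
    using le_Suc_ex by (metis add_Suc)
  have "[c * fibo (Suc n) = c * r] (mod m)"
    using gib_cong_fibo_after_multiple[OF \<open>m dvd gib a b k\<close>, of n]
      \<open>gib a b j' mod m = _\<close> \<open>gib a b j mod m = _\<close>
    unfolding j' c_def cong_def by simp
  then have "[fibo (Suc n) = r] (mod m)"
    using \<open>coprime c m\<close> cong_mult_lcancel by blast
  then show "\<exists>n\<ge>1. fibo n mod m = r mod m"
    unfolding cong_def by (intro exI[of _ "Suc n"]) simp
qed

theorem mainTheorem4:
  fixes m a b :: int
  assumes "m \<ge> 2"
    and "defective_mod fibo m"
    and "gcd a b = 1"
  shows "defective_mod (gib a b) m"
proof -
  have "m > 0"
    using assms(1) by simp
  then show ?thesis
    using complete_fibo_if_complete_gib[of m a b] assms(2,3) unfolding defective_mod_def by blast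
qed

end
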